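(* For any quasi-PL space $\mathcal{F}$, the underlying simplicial set $\mathcal{F}_\bullet$ is a Kan complex.
   Context: $\mathbf{PL}$ is the category of PL spaces and PL maps. A quasi-PL space is a functor $\mathcal{F}:\mathbf{PL}^{op}\to\mathbf{Sets}$ that is a sheaf for open covers and such that, for every PL space $P$ and every locally finite cover $\{Q_i\}$ of $P$ by closed PL subspaces, $\mathcal{F}(P)\to\prod_i\mathcal{F}(Q_i)\rightrightarrows\prod_{i,j}\mathcal{F}(Q_i\cap Q_j)$ is an equalizer. The underlying simplicial set $\mathcal{F}_\bullet$ is the composite of $\mathcal{F}$ with the functor $\Delta\to\mathbf{PL}$ sending $[p]$ to the geometric simplex $\Delta^p$ (the convex hull of the standard basis of $\mathbb{R}^{p+1}$) and an order-preserving map to the induced linear map. Thus $\mathcal{F}_p=\mathcal{F}(\Delta^p)$. *)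

theory Defs
  imports "HOL-Analysis.Analysis"
begin

text \<open>Points of the ambient space: finitely supported real sequences (R^infinity);
every PL space lives in some R^N = {x. \<forall>i\<ge>N. x i = 0}.  The topology is the
product topology, which restricts to the Euclidean topology on each R^N.\<close>

type_synonym pt = "nat \<Rightarrow> real"

definition comb :: "pt set \<Rightarrow> (pt \<Rightarrow> real) \<Rightarrow> pt" where
  "comb V t = (\<lambda>i. \<Sum>v\<in>V. t v * v i)"

definition convex_weights :: "pt set \<Rightarrow> (pt \<Rightarrow> real) \<Rightarrow> bool" where
  "convex_weights V t \<longleftrightarrow> (\<forall>v\<in>V. 0 \<le> t v) \<and> (\<Sum>v\<in>V. t v) = 1"

definition hull_pts :: "pt set \<Rightarrow> pt set" where
  "hull_pts V = {comb V t | t. convex_weights V t}"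

definition locally_finite_in :: "pt set \<Rightarrow> pt set set \<Rightarrow> bool" where
  "locally_finite_in P K \<longleftrightarrow>
     (\<forall>x\<in>P. \<exists>U. open U \<and> x \<in> U \<and> finite {C\<in>K. C \<inter> U \<noteq> {}})"

definition polytope_cover :: "pt set \<Rightarrow> pt set set \<Rightarrow> bool" where
  "polytope_cover P K \<longleftrightarrow>
     (\<forall>C\<in>K. \<exists>V. finite V \<and> C = hull_pts V) \<and> \<Union>K = P \<and> locally_finite_in P K"

definition pl_space :: "pt set \<Rightarrow> bool" where
  "pl_space P \<longleftrightarrow> (\<exists>N. \<forall>x\<in>P. \<forall>i\<ge>N. x i = 0) \<and> (\<exists>K. polytope_cover P K)"

definition pl_map :: "pt set \<Rightarrow> pt set \<Rightarrow> (pt \<Rightarrow> pt) \<Rightarrow> bool" where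
  "pl_map P Q f \<longleftrightarrow> pl_space P \<and> pl_space Q \<and> f ` P \<subseteq> Q \<and> continuous_on P f \<and>
     (\<exists>K. polytope_cover P K \<and>
        (\<forall>C\<in>K. \<exists>V. finite V \<and> C = hull_pts V \<and>
           (\<forall>t. convex_weights V t \<longrightarrow> f (comb V t) = (\<lambda>i. \<Sum>v\<in>V. t v * f v i))))"

text \<open>A presheaf F : PL^op \<rightarrow> Sets, given by its object part Fo and its action
Fm P Q f : Fo Q \<rightarrow> Fo P on a PL map f : P \<rightarrow> Q (depending only on f restricted to P).\<close>
definition presheaf :: "(pt set \<Rightarrow> 'a set) \<Rightarrow> (pt set \<Rightarrow> pt set \<Rightarrow> (pt \<Rightarrow> pt) \<Rightarrow> 'a \<Rightarrow> 'a) \<Rightarrow> bool" where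
  "presheaf Fo Fm \<longleftrightarrow>
     (\<forall>P Q f. pl_map P Q f \<longrightarrow> (\<forall>x\<in>Fo Q. Fm P Q f x \<in> Fo P)) \<and>
     (\<forall>P Q f g. pl_map P Q f \<and> (\<forall>x\<in>P. f x = g x) \<longrightarrow> (\<forall>y\<in>Fo Q. Fm P Q f y = Fm P Q g y)) \<and>
     (\<forall>P. pl_space P \<longrightarrow> (\<forall>x\<in>Fo P. Fm P P id x = x)) \<and>
     (\<forall>P Q R f g. pl_map P Q f \<and> pl_map Q R g \<longrightarrow>
        (\<forall>x\<in>Fo R. Fm P R (g \<circ> f) x = Fm P Q f (Fm Q R g x)))"

definition restr :: "(pt set \<Rightarrow> pt set \<Rightarrow> (pt \<Rightarrow> pt) \<Rightarrow> 'a \<Rightarrow> 'a) \<Rightarrow> pt set \<Rightarrow> pt set \<Rightarrow> 'a \<Rightarrow> 'a" where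
  "restr Fm A B = Fm A B id"

text \<open>F(P) \<rightarrow> \<Prod> F(C) \<rightrightarrows> \<Prod> F(C \<inter> D) is an equalizer.\<close>
definition equalizer_cond :: "(pt set \<Rightarrow> 'a set) \<Rightarrow> (pt set \<Rightarrow> pt set \<Rightarrow> (pt \<Rightarrow> pt) \<Rightarrow> 'a \<Rightarrow> 'a)
    \<Rightarrow> pt set \<Rightarrow> pt set set \<Rightarrow> bool" where
  "equalizer_cond Fo Fm P \<C> \<longleftrightarrow>
     (\<forall>s\<in>Fo P. \<forall>s'\<in>Fo P. (\<forall>C\<in>\<C>. restr Fm C P s = restr Fm C P s') \<longrightarrow> s = s') \<and>
     (\<forall>\<sigma>. (\<forall>C\<in>\<C>. \<sigma> C \<in> Fo C) \<and>
          (\<forall>C\<in>\<C>. \<forall>D\<in>\<C>. restr Fm (C \<inter> D) C (\<sigma> C) = restr Fm (C \<inter> D) D (\<sigma> D))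
        \<longrightarrow> (\<exists>s\<in>Fo P. \<forall>C\<in>\<C>. restr Fm C P s = \<sigma> C))"

definition quasi_pl_space :: "(pt set \<Rightarrow> 'a set) \<Rightarrow> (pt set \<Rightarrow> pt set \<Rightarrow> (pt \<Rightarrow> pt) \<Rightarrow> 'a \<Rightarrow> 'a) \<Rightarrow> bool" where
  "quasi_pl_space Fo Fm \<longleftrightarrow> presheaf Fo Fm \<and>
     (\<forall>P \<U>. pl_space P \<and> (\<forall>U\<in>\<U>. openin (top_of_set P) U) \<and> \<Union>\<U> = P
        \<longrightarrow> equalizer_cond Fo Fm P \<U>) \<and>
     (\<forall>P \<C>. pl_space P \<and> (\<forall>C\<in>\<C>. closedin (top_of_set P) C \<and> pl_space C) \<and> \<Union>\<C> = P
          \<and> locally_finite_in P \<C>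
        \<longrightarrow> equalizer_cond Fo Fm P \<C>)"

definition std_simplex :: "nat \<Rightarrow> pt set" where
  "std_simplex p = {x. (\<forall>i. 0 \<le> x i) \<and> (\<forall>i>p. x i = 0) \<and> (\<Sum>i\<le>p. x i) = 1}"

text \<open>Linear map \<Delta>^m \<rightarrow> \<Delta>^n induced by \<theta> : [m] \<rightarrow> [n] (e_k \<mapsto> e_{\<theta> k}).\<close>
definition simplex_map :: "(nat \<Rightarrow> nat) \<Rightarrow> nat \<Rightarrow> pt \<Rightarrow> pt" where
  "simplex_map \<theta> m x = (\<lambda>j. \<Sum>k\<le>m. if \<theta> k = j then x k else 0)"

definition sset_obj :: "(pt set \<Rightarrow> 'a set) \<Rightarrow> nat \<Rightarrow> 'a set" where
  "sset_obj Fo p = Fo (std_simplex p)"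

definition sset_op :: "(pt set \<Rightarrow> pt set \<Rightarrow> (pt \<Rightarrow> pt) \<Rightarrow> 'a \<Rightarrow> 'a)
    \<Rightarrow> (nat \<Rightarrow> nat) \<Rightarrow> nat \<Rightarrow> nat \<Rightarrow> 'a \<Rightarrow> 'a" where
  "sset_op Fm \<theta> m n = Fm (std_simplex m) (std_simplex n) (simplex_map \<theta> m)"

definition coface :: "nat \<Rightarrow> nat \<Rightarrow> nat" where
  "coface i j = (if j < i then j else Suc j)"

text \<open>Kan condition: every horn \<Lambda>^n_k \<rightarrow> X (a compatible family of (n-1)-simplices
x_i, i \<noteq> k, with d_i x_j = d_{j-1} x_i for i < j) extends to an n-simplex.\<close>
definition kan_complex :: "(nat \<Rightarrow> 'a set) \<Rightarrow> ((nat \<Rightarrow> nat) \<Rightarrow> nat \<Rightarrow> nat \<Rightarrow> 'a \<Rightarrow> 'a) \<Rightarrow> bool" where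
  "kan_complex X op \<longleftrightarrow>
     (\<forall>n k x. 1 \<le> n \<and> k \<le> n \<and>
        (\<forall>i\<le>n. i \<noteq> k \<longrightarrow> x i \<in> X (n - 1)) \<and>
        (\<forall>i j. i < j \<and> j \<le> n \<and> i \<noteq> k \<and> j \<noteq> k \<longrightarrow>
            op (coface i) (n - 2) (n - 1) (x j) = op (coface (j - 1)) (n - 2) (n - 1) (x i))
      \<longrightarrow> (\<exists>y\<in>X n. \<forall>i\<le>n. i \<noteq> k \<longrightarrow> op (coface i) (n - 1) n y = x i))"

end

theory Submission
  imports Defs
begin

text \<open>A horn in the underlying simplicial set is a family of sections x_i in F(Delta^(n-1)),
i ~= k. Transported to the facets of Delta^n, the face relations say precisely that they agree on
pairwise intersections, so the equalizer condition for the closed cover of the geometric horn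
Lambda^n_k by its facets glues them to one section s over Lambda^n_k. The horn is a PL retract of
Delta^n: if m(x) is the least barycentric coordinate x_j with j ~= k, then
r(x) = x + m(x) (n e_k - sum_{i ~= k} e_i) slides x parallel to the segment from the barycenter c of
the facet opposite e_k towards e_k until x_j vanishes, and r is affine on each cell
conv(c, e_l : l ~= j). Pulling s back along r gives the filler.\<close>

section \<open>Faces of the standard simplex\<close>

definition vertex :: "nat \<Rightarrow> pt" where
  "vertex l = (\<lambda>i. if i = l then 1 else 0)"

definition simplex_face :: "nat set \<Rightarrow> pt set" where
  "simplex_face S = {x. (\<forall>i. 0 \<le> x i) \<and> (\<forall>i. i \<notin> S \<longrightarrow> x i = 0) \<and> sum x S = 1}"

lemma std_simplex_eq_simplex_face: "std_simplex p = simplex_face {..p}"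
  unfolding std_simplex_def simplex_face_def by auto

lemma inj_vertex: "inj vertex"
  by (rule injI) (metis vertex_def zero_neq_one)

lemma sum_vertex_image:
  "(\<Sum>v\<in>vertex ` S. f v) = (\<Sum>l\<in>S. f (vertex l))"
  by (rule sum.reindex_cong[OF inj_on_subset[OF inj_vertex]]) auto

lemma comb_vertex_image:
  assumes "finite S"
  shows "comb (vertex ` S) t = (\<lambda>i. if i \<in> S then t (vertex i) else 0)"
proof
  fix i
  have "comb (vertex ` S) t i = (\<Sum>l\<in>S. if l = i then t (vertex i) else 0)"
    unfolding comb_def sum_vertex_image by (rule sum.cong) (auto simp: vertex_def)
  then show "comb (vertex ` S) t i = (if i \<in> S then t (vertex i) else 0)"
    using assms by simp
qed

lemma hull_pts_vertex_image:
  assumes "finite S"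
  shows "hull_pts (vertex ` S) = simplex_face S"
proof
  show "hull_pts (vertex ` S) \<subseteq> simplex_face S"
  proof
    fix x assume "x \<in> hull_pts (vertex ` S)"
    then obtain t where x: "x = comb (vertex ` S) t" and t: "convex_weights (vertex ` S) t"
      unfolding hull_pts_def by auto
    have "sum x S = (\<Sum>l\<in>S. t (vertex l))"
      by (simp add: x comb_vertex_image[OF assms])
    then show "x \<in> simplex_face S"
      using t unfolding simplex_face_def convex_weights_def sum_vertex_image
      by (auto simp: x comb_vertex_image[OF assms])
  qed
next
  show "simplex_face S \<subseteq> hull_pts (vertex ` S)"
  proof
    fix x assume x: "x \<in> simplex_face S"
    define t where "t v = (\<Sum>l\<in>S. v l * x l)" for v :: pt
    have t_vertex: "t (vertex i) = (if i \<in> S then x i else 0)" for i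
    proof -
      have "t (vertex i) = (\<Sum>l\<in>S. if l = i then x i else 0)"
        unfolding t_def vertex_def by (rule sum.cong) auto
      then show ?thesis using assms by simp
    qed
    have "x = comb (vertex ` S) t"
      using x by (auto simp: comb_vertex_image[OF assms] t_vertex simplex_face_def)
    moreover have "convex_weights (vertex ` S) t"
      using x unfolding convex_weights_def simplex_face_def sum_vertex_image
      by (auto simp: t_vertex)
    ultimately show "x \<in> hull_pts (vertex ` S)"
      unfolding hull_pts_def by auto
  qed
qed

lemma vertex_in_simplex_face_iff:
  assumes "finite S"
  shows "vertex l \<in> simplex_face S \<longleftrightarrow> l \<in> S"
proof -
  have "sum (vertex l) S = (if l \<in> S then 1 else 0)"
    using assms by (simp add: vertex_def sum.delta')
  then show ?thesis unfolding simplex_face_def by (auto simp: vertex_def)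
qed

lemma simplex_face_mono:
  assumes "finite B" "A \<subseteq> B"
  shows "simplex_face A \<subseteq> simplex_face B"
proof
  fix x assume x: "x \<in> simplex_face A"
  have "sum x B = sum x A"
    by (rule sum.mono_neutral_right) (use assms x in \<open>auto simp: simplex_face_def\<close>)
  then show "x \<in> simplex_face B"
    using x assms unfolding simplex_face_def by auto
qed

lemma simplex_face_Int:
  assumes "finite A" "finite B"
  shows "simplex_face A \<inter> simplex_face B = simplex_face (A \<inter> B)"
proof
  show "simplex_face A \<inter> simplex_face B \<subseteq> simplex_face (A \<inter> B)"
  proof
    fix x assume x: "x \<in> simplex_face A \<inter> simplex_face B"
    have "sum x A = sum x (A \<inter> B)"
      by (rule sum.mono_neutral_right) (use assms x in \<open>auto simp: simplex_face_def\<close>)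
    then show "x \<in> simplex_face (A \<inter> B)"
      using x unfolding simplex_face_def by auto
  qed
  show "simplex_face (A \<inter> B) \<subseteq> simplex_face A \<inter> simplex_face B"
    using simplex_face_mono assms by (metis Int_lower1 Int_lower2 le_inf_iff)
qed

lemma sum_comb_eq_sum_weights:
  assumes "finite S" "V \<subseteq> simplex_face S"
  shows "(\<Sum>i\<in>S. comb V t i) = (\<Sum>v\<in>V. t v)"
proof -
  have "(\<Sum>i\<in>S. comb V t i) = (\<Sum>v\<in>V. t v * (\<Sum>i\<in>S. v i))"
    unfolding comb_def by (subst sum.swap) (simp add: sum_distrib_left)
  also have "\<dots> = (\<Sum>v\<in>V. t v)"
    by (rule sum.cong) (use assms in \<open>auto simp: simplex_face_def\<close>)
  finally show ?thesis .
qed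

lemma hull_pts_subset_simplex_face:
  assumes "finite S" "V \<subseteq> simplex_face S"
  shows "hull_pts V \<subseteq> simplex_face S"
proof
  fix x assume "x \<in> hull_pts V"
  then obtain t where x: "x = comb V t" and t: "convex_weights V t"
    unfolding hull_pts_def by auto
  have "0 \<le> x i" for i
    unfolding x comb_def using t assms(2) unfolding convex_weights_def simplex_face_def
    by (intro sum_nonneg) auto
  moreover have "x i = 0" if "i \<notin> S" for i
    unfolding x comb_def using that assms(2) unfolding simplex_face_def by (intro sum.neutral) auto
  moreover have "sum x S = 1"
    using sum_comb_eq_sum_weights[OF assms, of t] t x unfolding convex_weights_def by simp
  ultimately show "x \<in> simplex_face S"
    unfolding simplex_face_def by auto
qed

section \<open>Polyhedra and PL maps\<close>

lemma locally_finite_in_finite: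
  assumes "finite K"
  shows "locally_finite_in P K"
  unfolding locally_finite_in_def using assms by (intro ballI exI[of _ UNIV]) simp

lemma pl_space_finite_polytope_Union:
  assumes "\<forall>x\<in>P. \<forall>i\<ge>N. x i = 0"
    and "finite K" "\<forall>C\<in>K. \<exists>V. finite V \<and> C = hull_pts V" "\<Union>K = P"
  shows "pl_space P"
proof -
  have "polytope_cover P K"
    unfolding polytope_cover_def using assms(3,4) locally_finite_in_finite[OF assms(2)] by simp
  then show ?thesis
    unfolding pl_space_def using assms(1) by auto
qed

lemma pl_space_simplex_face:
  assumes "finite S"
  shows "pl_space (simplex_face S)"
proof -
  obtain N where N: "\<forall>i\<in>S. i < N"
    using finite_nat_bounded[OF assms] by auto
  have support: "\<forall>x\<in>simplex_face S. \<forall>i\<ge>N. x i = 0"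
  proof (intro ballI allI impI)
    fix x i assume "x \<in> simplex_face S" "N \<le> i"
    moreover have "i \<notin> S" using N \<open>N \<le> i\<close> by auto
    ultimately show "x i = 0" unfolding simplex_face_def by auto
  qed
  have cells: "\<forall>C\<in>{simplex_face S}. \<exists>V. finite V \<and> C = hull_pts V"
    using hull_pts_vertex_image[OF assms] assms by (intro ballI exI[of _ "vertex ` S"]) simp
  show ?thesis
    by (rule pl_space_finite_polytope_Union[OF support _ cells]) simp_all
qed

lemma pl_space_std_simplex [simp]: "pl_space (std_simplex p)"
  by (simp add: std_simplex_eq_simplex_face pl_space_simplex_face)

lemma continuous_on_coord [continuous_intros]: "continuous_on S (\<lambda>x::pt. x i)"
  by (rule continuous_on_subset[OF continuous_on_product_coordinates]) auto

lemma pl_map_affineI: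
  assumes "pl_space P" "pl_space Q" "f ` P \<subseteq> Q" "continuous_on P f"
    and "\<And>V t. finite V \<Longrightarrow> f (comb V t) = (\<lambda>i. \<Sum>v\<in>V. t v * f v i)"
  shows "pl_map P Q f"
proof -
  obtain K where K: "polytope_cover P K"
    using assms(1) unfolding pl_space_def by blast
  then have "\<forall>C\<in>K. \<exists>V. finite V \<and> C = hull_pts V \<and>
      (\<forall>t. convex_weights V t \<longrightarrow> f (comb V t) = (\<lambda>i. \<Sum>v\<in>V. t v * f v i))"
    using assms(5) unfolding polytope_cover_def by blast
  with K assms(1-4) show ?thesis
    unfolding pl_map_def by blast
qed

lemma pl_map_hull_cells:
  assumes "pl_space P" "pl_space Q" "f ` P \<subseteq> Q" "continuous_on P f"
    and "polytope_cover P (hull_pts ` \<V>)" "\<forall>V\<in>\<V>. finite V"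
    and "\<And>V t. V \<in> \<V> \<Longrightarrow> convex_weights V t \<Longrightarrow> f (comb V t) = (\<lambda>i. \<Sum>v\<in>V. t v * f v i)"
  shows "pl_map P Q f"
proof -
  have "\<forall>C\<in>hull_pts ` \<V>. \<exists>V. finite V \<and> C = hull_pts V \<and>
      (\<forall>t. convex_weights V t \<longrightarrow> f (comb V t) = (\<lambda>i. \<Sum>v\<in>V. t v * f v i))"
    using assms(6,7) by blast
  with assms(1-5) show ?thesis
    unfolding pl_map_def by blast
qed

lemma pl_map_id_subset:
  assumes "pl_space P" "pl_space Q" "P \<subseteq> Q"
  shows "pl_map P Q id"
  by (rule pl_map_affineI) (use assms in \<open>auto simp: comb_def\<close>)

lemma pl_map_pl_space: "pl_map P Q f \<Longrightarrow> pl_space P \<and> pl_space Q"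
  unfolding pl_map_def by (elim conjE) simp

lemma pl_map_restrict_codomain:
  assumes "pl_map P Q f" "pl_space R" "f ` P \<subseteq> R"
  shows "pl_map P R f"
  using assms unfolding pl_map_def by (elim conjE) (intro conjI; assumption)

lemma simplex_map_comb:
  "simplex_map \<theta> m (comb V t) = (\<lambda>i. \<Sum>v\<in>V. t v * simplex_map \<theta> m v i)"
proof
  fix j
  have "simplex_map \<theta> m (comb V t) j = (\<Sum>l\<le>m. \<Sum>v\<in>V. if \<theta> l = j then t v * v l else 0)"
    unfolding simplex_map_def comb_def by (rule sum.cong) auto
  also have "\<dots> = (\<Sum>v\<in>V. t v * simplex_map \<theta> m v j)"
    unfolding simplex_map_def by (subst sum.swap) (auto simp: sum_distrib_left intro!: sum.cong)
  finally show "simplex_map \<theta> m (comb V t) j = (\<Sum>v\<in>V. t v * simplex_map \<theta> m v j)" .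
qed

lemma continuous_on_simplex_map: "continuous_on S (simplex_map \<theta> m)"
proof -
  have "continuous_on S (\<lambda>x::pt. if \<theta> l = j then x l else 0)" for l j
    by (cases "\<theta> l = j") (auto intro: continuous_intros)
  then show ?thesis
    unfolding simplex_map_def
    by (intro continuous_on_coordinatewise_then_product continuous_on_sum)
qed

lemma pl_map_simplex_map:
  assumes "pl_space P" "pl_space Q" "simplex_map \<theta> m ` P \<subseteq> Q"
  shows "pl_map P Q (simplex_map \<theta> m)"
  by (rule pl_map_affineI[OF assms continuous_on_simplex_map simplex_map_comb])

lemma pl_map_precomp:
  assumes "pl_space P" "pl_space Q" "(\<lambda>x. x \<circ> g) ` P \<subseteq> Q"
  shows "pl_map P Q (\<lambda>x. x \<circ> g)"
proof (rule pl_map_affineI[OF assms])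
  show "continuous_on P (\<lambda>x. x \<circ> g)"
    unfolding o_def by (intro continuous_intros)
qed (auto simp: comb_def)

section \<open>Face maps and facets\<close>

definition coface_inv :: "nat \<Rightarrow> nat \<Rightarrow> nat" where
  "coface_inv a j = (if j < a then j else j - 1)"

lemma coface_inv_coface [simp]: "coface_inv a (coface a l) = l"
  unfolding coface_inv_def coface_def by auto

lemma coface_neq [simp]: "coface a l \<noteq> a"
  unfolding coface_def by auto

lemma coface_coface_inv: "j \<noteq> a \<Longrightarrow> coface a (coface_inv a j) = j"
  unfolding coface_inv_def coface_def by auto

lemma coface_eq_iff: "coface a l = j \<longleftrightarrow> j \<noteq> a \<and> l = coface_inv a j"
  unfolding coface_def coface_inv_def by auto

lemma inj_on_coface_inv: "a \<notin> S \<Longrightarrow> inj_on (coface_inv a) S"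
  by (rule inj_on_inverseI[of _ "coface a"]) (metis coface_coface_inv)

lemma coface_comp_coface: "i < j \<Longrightarrow> coface j \<circ> coface i = coface i \<circ> coface (j - 1)"
  unfolding coface_def by (auto simp: fun_eq_iff)

lemma coface_image:
  assumes "a \<le> Suc m"
  shows "coface a ` {..m} = {..Suc m} - {a}"
proof -
  have "j \<in> coface a ` {..m}" if "j \<le> Suc m" "j \<noteq> a" for j
  proof
    show "j = coface a (coface_inv a j)" using that by (simp add: coface_coface_inv)
    show "coface_inv a j \<in> {..m}" using that assms unfolding coface_inv_def by auto
  qed
  moreover have "coface a l \<le> Suc m" if "l \<le> m" for l
    using that unfolding coface_def by auto
  ultimately show ?thesis by auto
qed

lemma coface_inv_image:
  assumes "a \<le> Suc m"
  shows "coface_inv a ` ({..Suc m} - {a}) = {..m}"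
proof -
  have "l \<in> coface_inv a ` ({..Suc m} - {a})" if "l \<le> m" for l
  proof
    show "l = coface_inv a (coface a l)" by simp
    show "coface a l \<in> {..Suc m} - {a}" using that unfolding coface_def by auto
  qed
  moreover have "coface_inv a j \<le> m" if "j \<le> Suc m" "j \<noteq> a" for j
    using that assms unfolding coface_inv_def by auto
  ultimately show ?thesis by auto
qed

lemma coface_inv_image_Diff2:
  assumes "i < j" "j \<le> Suc m"
  shows "coface_inv j ` ({..Suc m} - {i, j}) = {..m} - {i}"
proof -
  have "l \<in> coface_inv j ` ({..Suc m} - {i, j})" if "l \<le> m" "l \<noteq> i" for l
  proof
    show "l = coface_inv j (coface j l)" by simp
    show "coface j l \<in> {..Suc m} - {i, j}" using that assms unfolding coface_def by auto
  qed
  moreover have "coface_inv j l \<le> m \<and> coface_inv j l \<noteq> i" if "l \<le> Suc m" "l \<noteq> i" "l \<noteq> j" for l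
    using that assms unfolding coface_inv_def by auto
  ultimately show ?thesis by auto
qed

lemma simplex_map_coface_apply:
  "simplex_map (coface a) m x j = (if j \<noteq> a \<and> coface_inv a j \<le> m then x (coface_inv a j) else 0)"
proof -
  have "simplex_map (coface a) m x j =
      (\<Sum>l\<le>m. if l = coface_inv a j then (if j \<noteq> a then x (coface_inv a j) else 0) else 0)"
    unfolding simplex_map_def by (rule sum.cong) (auto simp: coface_eq_iff)
  then show ?thesis by (simp only: sum.delta finite_atMost) auto
qed

lemma simplex_map_coface_comp_coface:
  assumes "y a = 0" "\<forall>l>Suc m. y l = 0" "a \<le> Suc m"
  shows "simplex_map (coface a) m (y \<circ> coface a) = y"
proof
  fix j
  show "simplex_map (coface a) m (y \<circ> coface a) j = y j"
  proof (cases "j = a")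
    case True
    then show ?thesis using assms by (simp add: simplex_map_coface_apply)
  next
    case False
    then have "coface_inv a j > m \<Longrightarrow> j > Suc m"
      using assms(3) unfolding coface_inv_def by (auto split: if_splits)
    then show ?thesis
      using False assms by (auto simp: simplex_map_coface_apply coface_coface_inv)
  qed
qed

lemma comp_coface_simplex_map_coface:
  assumes "\<forall>l>m. x l = 0"
  shows "simplex_map (coface a) m x \<circ> coface a = x"
  using assms by (auto simp: simplex_map_coface_apply fun_eq_iff not_le)

lemma comp_coface_in_simplex_face:
  assumes "a \<notin> S" "x \<in> simplex_face S"
  shows "x \<circ> coface a \<in> simplex_face (coface_inv a ` S)"
proof -
  have "(\<Sum>l\<in>coface_inv a ` S. (x \<circ> coface a) l) = (\<Sum>s\<in>S. x (coface a (coface_inv a s)))"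
    by (subst sum.reindex[OF inj_on_coface_inv[OF assms(1)]]) simp
  also have "\<dots> = sum x S"
    by (rule sum.cong) (use assms in \<open>metis coface_coface_inv\<close>)+
  finally have "(\<Sum>l\<in>coface_inv a ` S. (x \<circ> coface a) l) = 1"
    using assms unfolding simplex_face_def by simp
  moreover have "x (coface a l) = 0" if "l \<notin> coface_inv a ` S" for l
  proof -
    have "coface a l \<notin> S" using that by (metis coface_inv_coface image_eqI)
    then show ?thesis using assms unfolding simplex_face_def by auto
  qed
  ultimately show ?thesis
    using assms unfolding simplex_face_def by auto
qed

lemma simplex_map_coface_in_simplex_face:
  assumes "x \<in> simplex_face T" "T \<subseteq> {..m}"
  shows "simplex_map (coface a) m x \<in> simplex_face (coface a ` T)"
proof -
  let ?y = "simplex_map (coface a) m x"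
  have "sum ?y (coface a ` T) = sum (?y \<circ> coface a) T"
    by (rule sum.reindex) (meson coface_inv_coface inj_on_inverseI)
  also have "\<dots> = sum x T"
    by (rule sum.cong) (use assms in \<open>auto simp: simplex_map_coface_apply\<close>)
  finally have "sum ?y (coface a ` T) = 1"
    using assms unfolding simplex_face_def by simp
  moreover have "?y j = 0" if "j \<notin> coface a ` T" for j
  proof (cases "j \<noteq> a \<and> coface_inv a j \<le> m")
    case True
    then have "coface_inv a j \<notin> T" using that coface_coface_inv by force
    then show ?thesis using True assms by (simp add: simplex_map_coface_apply simplex_face_def)
  qed (auto simp: simplex_map_coface_apply)
  moreover have "0 \<le> ?y j" for j
    using assms by (simp add: simplex_map_coface_apply simplex_face_def)
  ultimately show ?thesis
    unfolding simplex_face_def by auto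
qed

definition facet :: "nat \<Rightarrow> nat \<Rightarrow> pt set" where
  "facet n i = simplex_face ({..n} - {i})"

lemma pl_space_facet [simp]: "pl_space (facet n i)"
  unfolding facet_def by (simp add: pl_space_simplex_face)

lemma facet_subset_std_simplex: "facet n i \<subseteq> std_simplex n"
  unfolding facet_def std_simplex_eq_simplex_face by (rule simplex_face_mono) auto

lemma inj_on_facet: "inj_on (facet n) {..n}"
proof
  fix i j assume "i \<in> {..n}" "j \<in> {..n}" "facet n i = facet n j"
  then have "vertex i \<in> simplex_face ({..n} - {i}) \<longleftrightarrow> vertex i \<in> simplex_face ({..n} - {j})"
    unfolding facet_def by simp
  then show "i = j"
    using \<open>i \<in> {..n}\<close> by (simp add: vertex_in_simplex_face_iff)
qed

lemma comp_coface_coface_image: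
  assumes "i < j" "j \<le> Suc (Suc p)"
  shows "(\<lambda>z. z \<circ> (coface j \<circ> coface i)) ` simplex_face ({..Suc (Suc p)} - {i, j}) \<subseteq> std_simplex p"
proof
  fix w assume "w \<in> (\<lambda>z. z \<circ> (coface j \<circ> coface i)) ` simplex_face ({..Suc (Suc p)} - {i, j})"
  then obtain z where z: "z \<in> simplex_face ({..Suc (Suc p)} - {i, j})" and w: "w = z \<circ> coface j \<circ> coface i"
    by (auto simp: o_assoc)
  have "z \<circ> coface j \<in> simplex_face (coface_inv j ` ({..Suc (Suc p)} - {i, j}))"
    by (rule comp_coface_in_simplex_face) (use z in auto)
  then have "z \<circ> coface j \<in> simplex_face ({..Suc p} - {i})"
    using coface_inv_image_Diff2[OF assms] by simp
  then have "z \<circ> coface j \<circ> coface i \<in> simplex_face (coface_inv i ` ({..Suc p} - {i}))"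
    by (rule comp_coface_in_simplex_face[rotated]) simp
  then show "w \<in> std_simplex p"
    using coface_inv_image[of i p] assms by (simp add: w std_simplex_eq_simplex_face)
qed

lemma simplex_map_coface_image:
  assumes "a \<le> Suc p"
  shows "simplex_map (coface a) p ` std_simplex p \<subseteq> facet (Suc p) a"
  using simplex_map_coface_in_simplex_face[of _ "{..p}" p a] coface_image[OF assms]
  by (auto simp: std_simplex_eq_simplex_face facet_def)

lemma comp_coface_image:
  assumes "a \<le> Suc p"
  shows "(\<lambda>z. z \<circ> coface a) ` facet (Suc p) a \<subseteq> std_simplex p"
  using comp_coface_in_simplex_face[of a "{..Suc p} - {a}"] coface_inv_image[OF assms]
  by (auto simp: std_simplex_eq_simplex_face facet_def)

lemma pl_map_simplex_map_coface:
  assumes "a \<le> Suc p" "facet (Suc p) a \<subseteq> Q" "pl_space Q"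
  shows "pl_map (std_simplex p) Q (simplex_map (coface a) p)"
  using simplex_map_coface_image[OF assms(1)] assms(2,3) by (intro pl_map_simplex_map) auto

lemma pl_map_comp_coface:
  assumes "a \<le> Suc p" "G \<subseteq> facet (Suc p) a" "pl_space G"
  shows "pl_map G (std_simplex p) (\<lambda>z. z \<circ> coface a)"
  using comp_coface_image[OF assms(1)] assms(2,3) by (intro pl_map_precomp) auto

section \<open>Presheaves on PL spaces\<close>

lemma presheaf_closed:
  assumes "presheaf Fo Fm" "pl_map P Q f" "z \<in> Fo Q"
  shows "Fm P Q f z \<in> Fo P"
proof -
  have "\<forall>P Q f. pl_map P Q f \<longrightarrow> (\<forall>x\<in>Fo Q. Fm P Q f x \<in> Fo P)"
    using assms(1) unfolding presheaf_def by (elim conjE)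
  then show ?thesis using assms(2,3) by simp
qed

lemma presheaf_cong:
  assumes "presheaf Fo Fm" "pl_map P Q f" "\<And>x. x \<in> P \<Longrightarrow> f x = g x" "z \<in> Fo Q"
  shows "Fm P Q f z = Fm P Q g z"
proof -
  have "\<forall>P Q f g. pl_map P Q f \<and> (\<forall>x\<in>P. f x = g x) \<longrightarrow> (\<forall>y\<in>Fo Q. Fm P Q f y = Fm P Q g y)"
    using assms(1) unfolding presheaf_def by (elim conjE)
  then show ?thesis using assms(2-4) by simp
qed

lemma presheaf_id:
  assumes "presheaf Fo Fm" "pl_space P" "z \<in> Fo P"
  shows "Fm P P id z = z"
proof -
  have "\<forall>P. pl_space P \<longrightarrow> (\<forall>x\<in>Fo P. Fm P P id x = x)"
    using assms(1) unfolding presheaf_def by (elim conjE)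
  then show ?thesis using assms(2,3) by simp
qed

lemma presheaf_comp:
  assumes "presheaf Fo Fm" "pl_map P Q f" "pl_map Q R g" "z \<in> Fo R"
  shows "Fm P R (g \<circ> f) z = Fm P Q f (Fm Q R g z)"
proof -
  have "\<forall>P Q R f g. pl_map P Q f \<and> pl_map Q R g \<longrightarrow>
      (\<forall>x\<in>Fo R. Fm P R (g \<circ> f) x = Fm P Q f (Fm Q R g x))"
    using assms(1) unfolding presheaf_def by (elim conjE)
  then show ?thesis using assms(2-4) by simp
qed

lemma presheaf_left_inverse:
  assumes "presheaf Fo Fm" "pl_map P Q f" "pl_map Q P g" "\<And>x. x \<in> P \<Longrightarrow> g (f x) = x" "z \<in> Fo P"
  shows "Fm P Q f (Fm Q P g z) = z"
proof -
  have "pl_space P" using pl_map_pl_space[OF assms(2)] by simp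
  then have "pl_map P P id" by (simp add: pl_map_id_subset)
  have "Fm P Q f (Fm Q P g z) = Fm P P (g \<circ> f) z"
    by (rule presheaf_comp[OF assms(1-3,5), symmetric])
  also have "\<dots> = Fm P P id z"
    using presheaf_cong[OF assms(1) \<open>pl_map P P id\<close> _ assms(5), of "g \<circ> f"] assms(4) by simp
  also have "\<dots> = z"
    by (rule presheaf_id[OF assms(1) \<open>pl_space P\<close> assms(5)])
  finally show ?thesis .
qed

lemma presheaf_restr_factor:
  assumes "presheaf Fo Fm" "pl_map X A f" "f ` X \<subseteq> B" "B \<subseteq> A" "pl_space B" "s \<in> Fo A"
  shows "Fm X A f s = Fm X B f (restr Fm B A s)"
proof -
  have "pl_map X B f"
    by (rule pl_map_restrict_codomain[OF assms(2,5,3)])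
  moreover have "pl_map B A id"
    using assms(4,5) pl_map_pl_space[OF assms(2)] by (simp add: pl_map_id_subset)
  ultimately have "Fm X A (id \<circ> f) s = Fm X B f (restr Fm B A s)"
    unfolding restr_def by (rule presheaf_comp[OF assms(1) _ _ assms(6)])
  then show ?thesis by simp
qed

lemma presheaf_retraction:
  assumes "presheaf Fo Fm" "pl_map P A r" "\<And>a. a \<in> A \<Longrightarrow> r a = a"
    and "pl_map X P f" "f ` X \<subseteq> A" "s \<in> Fo A"
  shows "Fm X P f (Fm P A r s) = Fm X A f s"
proof -
  have fA: "pl_map X A f"
    using pl_map_pl_space[OF assms(2)] by (intro pl_map_restrict_codomain[OF assms(4) _ assms(5)]) simp
  have "Fm X P f (Fm P A r s) = Fm X A (r \<circ> f) s"
    by (rule presheaf_comp[OF assms(1,4,2,6), symmetric])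
  also have "\<dots> = Fm X A f s"
    using presheaf_cong[OF assms(1) fA _ assms(6), of "r \<circ> f"] assms(3,5) by (simp add: image_subset_iff)
  finally show ?thesis .
qed

lemma presheaf_restr_natural:
  assumes "presheaf Fo Fm" "G \<subseteq> F" "pl_space G" "pl_map F Q f" "pl_map G Q f"
    and "pl_map G R g" "pl_map R Q h" "\<And>z. z \<in> G \<Longrightarrow> f z = h (g z)" "x \<in> Fo Q"
  shows "restr Fm G F (Fm F Q f x) = Fm G R g (Fm R Q h x)"
proof -
  have GF: "pl_map G F id"
    using assms(2,3) pl_map_pl_space[OF assms(4)] by (simp add: pl_map_id_subset)
  have "restr Fm G F (Fm F Q f x) = Fm G Q (f \<circ> id) x"
    unfolding restr_def by (rule presheaf_comp[OF assms(1) GF assms(4,9), symmetric])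
  also have "\<dots> = Fm G Q (h \<circ> g) x"
    using presheaf_cong[OF assms(1,5) _ assms(9), of "h \<circ> g"] assms(8) by simp
  also have "\<dots> = Fm G R g (Fm R Q h x)"
    by (rule presheaf_comp[OF assms(1,6,7,9)])
  finally show ?thesis .
qed

lemma equalizer_cond_glue:
  fixes F :: "'i::linorder \<Rightarrow> pt set"
  assumes "equalizer_cond Fo Fm P (F ` I)" "inj_on F I"
    and "\<And>i. i \<in> I \<Longrightarrow> \<tau> i \<in> Fo (F i)"
    and "\<And>i j. i \<in> I \<Longrightarrow> j \<in> I \<Longrightarrow> i < j \<Longrightarrow>
           restr Fm (F i \<inter> F j) (F i) (\<tau> i) = restr Fm (F i \<inter> F j) (F j) (\<tau> j)"
  obtains s where "s \<in> Fo P" "\<And>i. i \<in> I \<Longrightarrow> restr Fm (F i) P s = \<tau> i"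
proof -
  define \<sigma> where "\<sigma> C = \<tau> (inv_into I F C)" for C
  have \<sigma>_F: "\<sigma> (F i) = \<tau> i" if "i \<in> I" for i
    using assms(2) that by (simp add: \<sigma>_def)
  have "\<forall>C\<in>F ` I. \<forall>D\<in>F ` I. restr Fm (C \<inter> D) C (\<sigma> C) = restr Fm (C \<inter> D) D (\<sigma> D)"
  proof (intro ballI)
    fix C D assume "C \<in> F ` I" "D \<in> F ` I"
    then obtain i j where ij: "i \<in> I" "j \<in> I" and CD: "C = F i" "D = F j" by blast
    show "restr Fm (C \<inter> D) C (\<sigma> C) = restr Fm (C \<inter> D) D (\<sigma> D)"
      unfolding CD \<sigma>_F[OF ij(1)] \<sigma>_F[OF ij(2)]
      using assms(4)[OF ij] assms(4)[OF ij(2,1)] by (cases i j rule: linorder_cases) (auto simp: Int_commute)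
  qed
  moreover have "\<forall>C\<in>F ` I. \<sigma> C \<in> Fo C"
    using assms(3) \<sigma>_F by auto
  ultimately obtain s where "s \<in> Fo P" "\<forall>C\<in>F ` I. restr Fm C P s = \<sigma> C"
    using assms(1) unfolding equalizer_cond_def by blast
  then show ?thesis
    using that \<sigma>_F by auto
qed

lemma quasi_pl_space_presheaf: "quasi_pl_space Fo Fm \<Longrightarrow> presheaf Fo Fm"
  unfolding quasi_pl_space_def by (rule conjunct1)

lemma quasi_pl_space_closed_cover:
  assumes "quasi_pl_space Fo Fm" "pl_space P"
    and "\<And>C. C \<in> \<C> \<Longrightarrow> closedin (top_of_set P) C \<and> pl_space C" "\<Union>\<C> = P" "locally_finite_in P \<C>"
  shows "equalizer_cond Fo Fm P \<C>"
proof -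
  have "\<forall>P \<C>. pl_space P \<and> (\<forall>C\<in>\<C>. closedin (top_of_set P) C \<and> pl_space C) \<and> \<Union>\<C> = P
          \<and> locally_finite_in P \<C> \<longrightarrow> equalizer_cond Fo Fm P \<C>"
    using assms(1) unfolding quasi_pl_space_def by (elim conjE)
  then show ?thesis using assms(2-5) by (metis assms(4))
qed

section \<open>The horn as a PL retract of the simplex\<close>

definition horn :: "nat \<Rightarrow> nat \<Rightarrow> pt set" where
  "horn n k = \<Union> (facet n ` ({..n} - {k}))"

definition min_coord :: "nat \<Rightarrow> nat \<Rightarrow> pt \<Rightarrow> real" where
  "min_coord n k x = Min ((\<lambda>i. x i) ` ({..n} - {k}))"

definition horn_retraction :: "nat \<Rightarrow> nat \<Rightarrow> pt \<Rightarrow> pt" where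
  "horn_retraction n k x =
     (\<lambda>i. if i = k then x k + real n * min_coord n k x
          else if i \<le> n then x i - min_coord n k x else x i)"

definition opposite_barycenter :: "nat \<Rightarrow> nat \<Rightarrow> pt" where
  "opposite_barycenter n k = (\<lambda>i. if i \<le> n \<and> i \<noteq> k then 1 / real n else 0)"

definition cell_vertices :: "nat \<Rightarrow> nat \<Rightarrow> nat \<Rightarrow> pt set" where
  "cell_vertices n k j = insert (opposite_barycenter n k) (vertex ` ({..n} - {j}))"

definition retraction_cell :: "nat \<Rightarrow> nat \<Rightarrow> nat \<Rightarrow> pt set" where
  "retraction_cell n k j = hull_pts (cell_vertices n k j)"

lemma continuous_on_Min_coord:
  assumes "finite A" "A \<noteq> {}"
  shows "continuous_on S (\<lambda>x::pt. Min ((\<lambda>i. x i) ` A))"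
  using assms
proof (induction A rule: finite_ne_induct)
  case (singleton a)
  then show ?case by (simp add: continuous_intros)
next
  case (insert a A)
  have "(\<lambda>x::pt. Min ((\<lambda>i. x i) ` insert a A)) = (\<lambda>x. min (x a) (Min ((\<lambda>i. x i) ` A)))"
    using insert by (auto simp: Min_insert)
  then show ?case
    using insert by (auto intro!: continuous_intros)
qed

context
  fixes n k :: nat
  assumes n1: "1 \<le> n" and kn: "k \<le> n"
begin

lemma other_vertices_nonempty: "{..n} - {k} \<noteq> {}"
proof -
  have "(if k = 0 then 1 else 0) \<in> {..n} - {k}"
    using n1 by auto
  then show ?thesis by blast
qed

lemma card_other_vertices: "card ({..n} - {k}) = n"
  using kn by (simp add: card_Diff_singleton)

lemma min_coord_le: "i \<in> {..n} - {k} \<Longrightarrow> min_coord n k x \<le> x i"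
  unfolding min_coord_def by (rule Min_le) auto

lemma min_coord_greatest: "(\<And>i. i \<in> {..n} - {k} \<Longrightarrow> c \<le> x i) \<Longrightarrow> c \<le> min_coord n k x"
  unfolding min_coord_def using other_vertices_nonempty by (subst Min_ge_iff) auto

lemma min_coord_attained: "\<exists>j\<in>{..n} - {k}. x j = min_coord n k x"
proof -
  have "min_coord n k x \<in> (\<lambda>i. x i) ` ({..n} - {k})"
    unfolding min_coord_def using other_vertices_nonempty by (intro Min_in) auto
  then show ?thesis by auto
qed

lemma min_coord_eqI:
  "j \<in> {..n} - {k} \<Longrightarrow> (\<And>i. i \<in> {..n} - {k} \<Longrightarrow> x j \<le> x i) \<Longrightarrow> min_coord n k x = x j"
  using min_coord_le[of j x] min_coord_greatest[of "x j" x] by auto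

lemma continuous_on_horn_retraction: "continuous_on S (horn_retraction n k)"
proof -
  have "continuous_on S (min_coord n k)"
    unfolding min_coord_def by (rule continuous_on_Min_coord) (use other_vertices_nonempty in auto)
  then have "continuous_on S (\<lambda>x. horn_retraction n k x i)" for i
    unfolding horn_retraction_def
    by (cases "i = k"; cases "i \<le> n") (auto intro!: continuous_intros)
  then show ?thesis
    by (rule continuous_on_coordinatewise_then_product)
qed

lemma horn_retraction_fixes_facet:
  assumes "i \<in> {..n} - {k}" "x \<in> facet n i"
  shows "horn_retraction n k x = x"
proof -
  have "min_coord n k x = 0"
    using min_coord_le[OF assms(1), of x] min_coord_greatest[of 0 x] assms
    unfolding facet_def simplex_face_def by force
  then show ?thesis
    using assms unfolding horn_retraction_def facet_def simplex_face_def by (auto simp: fun_eq_iff)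
qed

lemma horn_retraction_fixes_horn: "x \<in> horn n k \<Longrightarrow> horn_retraction n k x = x"
  unfolding horn_def using horn_retraction_fixes_facet by auto

lemma horn_retraction_in_horn:
  assumes "x \<in> std_simplex n"
  shows "horn_retraction n k x \<in> horn n k"
proof -
  let ?r = "horn_retraction n k x" and ?m = "min_coord n k x"
  obtain j where j: "j \<in> {..n} - {k}" "x j = ?m"
    using min_coord_attained by blast
  have x: "x \<in> simplex_face {..n}"
    using assms std_simplex_eq_simplex_face by simp
  have "0 \<le> ?m"
    using x by (intro min_coord_greatest) (auto simp: simplex_face_def)
  define g where "g i = (if i = k then real n * ?m else if i \<le> n then - ?m else 0)" for i
  have r_eq: "?r i = x i + g i" for i
    unfolding horn_retraction_def g_def by auto
  have "sum g {..n} = g k + sum g ({..n} - {k})"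
    using kn by (simp add: sum.remove)
  also have "sum g ({..n} - {k}) = (\<Sum>i\<in>{..n} - {k}. - ?m)"
    by (rule sum.cong) (auto simp: g_def)
  finally have "sum g {..n} = 0"
    using card_other_vertices by (simp add: g_def)
  then have "sum ?r {..n} = 1"
    using x by (simp add: r_eq sum.distrib simplex_face_def)
  moreover have "sum ?r {..n} = ?r j + sum ?r ({..n} - {j})"
    using j by (simp add: sum.remove)
  moreover have "?r j = 0"
    using j unfolding horn_retraction_def by auto
  ultimately have "sum ?r ({..n} - {j}) = 1" by simp
  moreover have "0 \<le> ?r i" for i
    using x \<open>0 \<le> ?m\<close> min_coord_le[of i x] unfolding horn_retraction_def simplex_face_def by auto
  moreover have "?r i = 0" if "i \<notin> {..n} - {j}" for i
    using that j x kn unfolding horn_retraction_def simplex_face_def by auto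
  ultimately have "?r \<in> facet n j"
    unfolding facet_def simplex_face_def by auto
  then show ?thesis
    unfolding horn_def using j by auto
qed

lemma opposite_barycenter_in_std_simplex: "opposite_barycenter n k \<in> simplex_face {..n}"
proof -
  let ?c = "opposite_barycenter n k"
  have "sum ?c {..n} = sum ?c ({..n} - {k}) + ?c k"
    using kn by (simp add: sum.remove add.commute)
  also have "\<dots> = (\<Sum>i\<in>{..n} - {k}. 1 / real n)"
    by (simp add: opposite_barycenter_def)
  also have "\<dots> = 1"
    using card_other_vertices n1 by simp
  finally show ?thesis
    unfolding simplex_face_def opposite_barycenter_def by auto
qed

lemma opposite_barycenter_not_vertex:
  "j \<in> {..n} - {k} \<Longrightarrow> opposite_barycenter n k \<notin> vertex ` ({..n} - {j})"
proof
  assume j: "j \<in> {..n} - {k}" and "opposite_barycenter n k \<in> vertex ` ({..n} - {j})"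
  then obtain l where l: "l \<in> {..n} - {j}" "opposite_barycenter n k = vertex l" by auto
  then have "opposite_barycenter n k j = vertex l j" by simp
  then show False
    using j l n1 by (auto simp: opposite_barycenter_def vertex_def)
qed

lemma comb_cell_vertices:
  assumes "j \<in> {..n} - {k}"
  shows "comb (cell_vertices n k j) t = (\<lambda>i. t (opposite_barycenter n k) * opposite_barycenter n k i
           + (if i \<in> {..n} - {j} then t (vertex i) else 0))"
proof -
  have "comb (cell_vertices n k j) t = (\<lambda>i. t (opposite_barycenter n k) * opposite_barycenter n k i
           + comb (vertex ` ({..n} - {j})) t i)"
    unfolding comb_def cell_vertices_def using opposite_barycenter_not_vertex[OF assms]
    by (simp add: sum.insert)
  then show ?thesis by (simp add: comb_vertex_image)
qed

lemma finite_cell_vertices: "finite (cell_vertices n k j)"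
  by (simp add: cell_vertices_def)

lemma cell_vertices_subset: "cell_vertices n k j \<subseteq> simplex_face {..n}"
  unfolding cell_vertices_def using opposite_barycenter_in_std_simplex
  by (auto simp: vertex_in_simplex_face_iff)

lemma retraction_cell_subset: "retraction_cell n k j \<subseteq> std_simplex n"
  unfolding retraction_cell_def std_simplex_eq_simplex_face
  by (rule hull_pts_subset_simplex_face) (simp_all add: cell_vertices_subset)

lemma horn_retraction_opposite_barycenter: "horn_retraction n k (opposite_barycenter n k) = vertex k"
proof -
  obtain j where "j \<in> {..n} - {k}"
    using other_vertices_nonempty by blast
  then have "min_coord n k (opposite_barycenter n k) = 1 / real n"
    by (subst min_coord_eqI[of j]) (auto simp: opposite_barycenter_def)
  then show ?thesis
    using n1 unfolding horn_retraction_def by (auto simp: opposite_barycenter_def vertex_def fun_eq_iff)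
qed

lemma horn_retraction_affine_on_cell:
  assumes j: "j \<in> {..n} - {k}" and t: "convex_weights (cell_vertices n k j) t"
  shows "horn_retraction n k (comb (cell_vertices n k j) t)
           = (\<lambda>i. \<Sum>v\<in>cell_vertices n k j. t v * horn_retraction n k v i)"
proof
  fix i
  let ?c = "opposite_barycenter n k" and ?x = "comb (cell_vertices n k j) t"
  have x: "?x i = t ?c * ?c i + (if i \<in> {..n} - {j} then t (vertex i) else 0)" for i
    using comb_cell_vertices[OF j] by simp
  have "min_coord n k ?x = ?x j"
  proof (rule min_coord_eqI[OF j])
    fix l assume "l \<in> {..n} - {k}"
    moreover have "0 \<le> t (vertex l)" if "l \<in> {..n} - {j}"
      using t that unfolding convex_weights_def cell_vertices_def by auto
    ultimately show "?x j \<le> ?x l"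
      using j by (auto simp: x opposite_barycenter_def)
  qed
  then have m: "min_coord n k ?x = t ?c / real n"
    using j by (simp add: x opposite_barycenter_def)
  have "(\<Sum>v\<in>vertex ` ({..n} - {j}). t v * horn_retraction n k v i) = comb (vertex ` ({..n} - {j})) t i"
    unfolding comb_def using horn_retraction_fixes_facet[OF j]
    by (intro sum.cong) (auto simp: facet_def vertex_in_simplex_face_iff)
  then have "(\<Sum>v\<in>cell_vertices n k j. t v * horn_retraction n k v i)
      = t ?c * vertex k i + (if i \<in> {..n} - {j} then t (vertex i) else 0)"
    unfolding cell_vertices_def using opposite_barycenter_not_vertex[OF j]
    by (simp add: sum.insert horn_retraction_opposite_barycenter comb_vertex_image)
  then show "horn_retraction n k ?x i = (\<Sum>v\<in>cell_vertices n k j. t v * horn_retraction n k v i)"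
    by (simp only: horn_retraction_def m x) (use n1 kn j in \<open>auto simp: opposite_barycenter_def vertex_def\<close>)
qed

lemma retraction_cells_cover:
  assumes "x \<in> std_simplex n"
  shows "\<exists>j\<in>{..n} - {k}. x \<in> retraction_cell n k j"
proof -
  let ?m = "min_coord n k x" and ?c = "opposite_barycenter n k"
  obtain j where j: "j \<in> {..n} - {k}" "x j = ?m"
    using min_coord_attained by blast
  let ?V = "cell_vertices n k j"
  have x: "x \<in> simplex_face {..n}"
    using assms std_simplex_eq_simplex_face by simp
  have "0 \<le> ?m"
    using x by (intro min_coord_greatest) (auto simp: simplex_face_def)
  define w where "w l = (if l = k then x k else x l - ?m)" for l
  define t where "t v = (if v = ?c then real n * ?m else (\<Sum>l\<in>{..n} - {j}. v l * w l))" for v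
  have t_vertex: "t (vertex l) = w l" if "l \<in> {..n} - {j}" for l
  proof -
    have "vertex l \<noteq> ?c"
      using opposite_barycenter_not_vertex[OF j(1)] that by (metis imageI)
    then have "t (vertex l) = (\<Sum>l'\<in>{..n} - {j}. vertex l l' * w l')"
      unfolding t_def by simp
    also have "\<dots> = (\<Sum>l'\<in>{..n} - {j}. if l' = l then w l else 0)"
      by (rule sum.cong) (auto simp: vertex_def)
    finally show ?thesis
      using that by (simp add: sum.delta')
  qed
  have t_c: "t ?c = real n * ?m"
    unfolding t_def by simp
  have comb: "comb ?V t = x"
  proof
    fix i
    have "comb ?V t i = real n * ?m * ?c i + (if i \<in> {..n} - {j} then w i else 0)"
      unfolding comb_cell_vertices[OF j(1)] t_c using t_vertex by auto
    then show "comb ?V t i = x i"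
      using j n1 x by (auto simp: opposite_barycenter_def w_def simplex_face_def)
  qed
  have "sum t ?V = 1"
    using sum_comb_eq_sum_weights[OF _ cell_vertices_subset[of j], of t] comb x by (simp add: simplex_face_def)
  moreover have "\<forall>v\<in>?V. 0 \<le> t v"
    using \<open>0 \<le> ?m\<close> x min_coord_le[of _ x]
    by (auto simp: cell_vertices_def t_vertex t_c w_def simplex_face_def)
  ultimately have "x \<in> retraction_cell n k j"
    unfolding retraction_cell_def hull_pts_def convex_weights_def using comb by auto
  then show ?thesis
    using j by blast
qed

lemma facet_subset_horn: "i \<in> {..n} - {k} \<Longrightarrow> facet n i \<subseteq> horn n k"
  unfolding horn_def by auto

lemma horn_subset_std_simplex: "horn n k \<subseteq> std_simplex n"
  unfolding horn_def using facet_subset_std_simplex by blast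

lemma pl_space_horn: "pl_space (horn n k)"
proof (rule pl_space_finite_polytope_Union[of _ "Suc n" "facet n ` ({..n} - {k})"])
  show "\<forall>x\<in>horn n k. \<forall>i\<ge>Suc n. x i = 0"
  proof (intro ballI allI impI)
    fix x i assume "x \<in> horn n k" "Suc n \<le> i"
    then show "x i = 0"
      using horn_subset_std_simplex unfolding std_simplex_def by auto
  qed
  show "\<forall>C\<in>facet n ` ({..n} - {k}). \<exists>V. finite V \<and> C = hull_pts V"
  proof
    fix C assume "C \<in> facet n ` ({..n} - {k})"
    then obtain i where "C = facet n i" by blast
    then show "\<exists>V. finite V \<and> C = hull_pts V"
      by (intro exI[of _ "vertex ` ({..n} - {i})"]) (simp add: facet_def hull_pts_vertex_image)
  qed
qed (simp_all add: horn_def)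

lemma polytope_cover_retraction_cells:
  "polytope_cover (std_simplex n) (retraction_cell n k ` ({..n} - {k}))"
  unfolding polytope_cover_def
proof (intro conjI ballI)
  fix C assume "C \<in> retraction_cell n k ` ({..n} - {k})"
  then obtain j where "C = retraction_cell n k j" by blast
  then show "\<exists>V. finite V \<and> C = hull_pts V"
    unfolding retraction_cell_def by (intro exI[of _ "cell_vertices n k j"]) (simp add: finite_cell_vertices)
next
  show "\<Union> (retraction_cell n k ` ({..n} - {k})) = std_simplex n"
    using retraction_cell_subset retraction_cells_cover by blast
qed (simp add: locally_finite_in_finite)

lemma pl_map_horn_retraction: "pl_map (std_simplex n) (horn n k) (horn_retraction n k)"
proof (rule pl_map_hull_cells[where \<V> = "cell_vertices n k ` ({..n} - {k})"])
  show "polytope_cover (std_simplex n) (hull_pts ` cell_vertices n k ` ({..n} - {k}))"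
    using polytope_cover_retraction_cells by (simp add: retraction_cell_def image_image)
qed (auto simp: pl_space_horn continuous_on_horn_retraction horn_retraction_in_horn
    horn_retraction_affine_on_cell finite_cell_vertices)

lemma closedin_facet_horn:
  assumes i: "i \<in> {..n} - {k}"
  shows "closedin (top_of_set (horn n k)) (facet n i)"
proof -
  have "facet n i = horn n k \<inter> {x. x i = 0}"
  proof
    show "facet n i \<subseteq> horn n k \<inter> {x. x i = 0}"
      using facet_subset_horn[OF i] unfolding facet_def simplex_face_def by auto
    show "horn n k \<inter> {x. x i = 0} \<subseteq> facet n i"
    proof
      fix x assume x: "x \<in> horn n k \<inter> {x. x i = 0}"
      then have "x \<in> simplex_face {..n}"
        using horn_subset_std_simplex std_simplex_eq_simplex_face by auto
      moreover have "sum x {..n} = x i + sum x ({..n} - {i})"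
        using i by (simp add: sum.remove)
      ultimately show "x \<in> facet n i"
        using x unfolding facet_def simplex_face_def by auto
    qed
  qed
  moreover have "closed {x::pt. x i = 0}"
    by (rule closed_Collect_eq) (auto intro: continuous_intros)
  ultimately show ?thesis
    by (simp add: closedin_closed_Int)
qed

end

section \<open>Horn fillers\<close>

definition facet_section ::
    "(pt set \<Rightarrow> pt set \<Rightarrow> (pt \<Rightarrow> pt) \<Rightarrow> 'a \<Rightarrow> 'a) \<Rightarrow> nat \<Rightarrow> nat \<Rightarrow> 'a \<Rightarrow> 'a" where
  "facet_section Fm n i x = Fm (facet n i) (std_simplex (n - 1)) (\<lambda>z. z \<circ> coface i) x"

lemma facet_section_closed:
  assumes "presheaf Fo Fm" "i \<le> n" "1 \<le> n" "x \<in> Fo (std_simplex (n - 1))"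
  shows "facet_section Fm n i x \<in> Fo (facet n i)"
proof -
  obtain m where n: "n = Suc m" using assms(3) by (cases n) auto
  show ?thesis
    unfolding facet_section_def
    using assms(2,4) n by (intro presheaf_closed[OF assms(1)] pl_map_comp_coface) auto
qed

lemma restr_facet_section:
  assumes "presheaf Fo Fm" "a \<le> Suc (Suc p)" "b \<le> Suc p"
    and "G \<subseteq> facet (Suc (Suc p)) a" "pl_space G" "(\<lambda>z. z \<circ> g) ` G \<subseteq> std_simplex p"
    and "\<And>z. z \<in> G \<Longrightarrow> z \<circ> coface a = simplex_map (coface b) p (z \<circ> g)"
    and "x \<in> Fo (std_simplex (Suc p))"
  shows "restr Fm G (facet (Suc (Suc p)) a) (facet_section Fm (Suc (Suc p)) a x)
     = Fm G (std_simplex p) (\<lambda>z. z \<circ> g)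
         (Fm (std_simplex p) (std_simplex (Suc p)) (simplex_map (coface b) p) x)"
  unfolding facet_section_def diff_Suc_1
proof (rule presheaf_restr_natural[where f = "\<lambda>z. z \<circ> coface a" and g = "\<lambda>z. z \<circ> g"
      and h = "simplex_map (coface b) p", OF assms(1,4,5) _ _ _ _ assms(7,8)])
  show "pl_map (facet (Suc (Suc p)) a) (std_simplex (Suc p)) (\<lambda>z. z \<circ> coface a)"
    by (rule pl_map_comp_coface[OF assms(2)]) simp_all
  show "pl_map G (std_simplex (Suc p)) (\<lambda>z. z \<circ> coface a)"
    by (rule pl_map_comp_coface[OF assms(2,4,5)])
  show "pl_map G (std_simplex p) (\<lambda>z. z \<circ> g)"
    by (rule pl_map_precomp[OF assms(5) _ assms(6)]) simp
  show "pl_map (std_simplex p) (std_simplex (Suc p)) (simplex_map (coface b) p)"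
    by (rule pl_map_simplex_map_coface[OF assms(3) facet_subset_std_simplex]) simp
qed

lemma facet_sections_compatible:
  assumes "presheaf Fo Fm" "i < j" "j \<le> Suc (Suc p)"
    and "xi \<in> Fo (std_simplex (Suc p))" "xj \<in> Fo (std_simplex (Suc p))"
    and "Fm (std_simplex p) (std_simplex (Suc p)) (simplex_map (coface i) p) xj
       = Fm (std_simplex p) (std_simplex (Suc p)) (simplex_map (coface (j - 1)) p) xi"
  shows "restr Fm (facet (Suc (Suc p)) i \<inter> facet (Suc (Suc p)) j) (facet (Suc (Suc p)) i)
           (facet_section Fm (Suc (Suc p)) i xi)
       = restr Fm (facet (Suc (Suc p)) i \<inter> facet (Suc (Suc p)) j) (facet (Suc (Suc p)) j)
           (facet_section Fm (Suc (Suc p)) j xj)"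
proof -
  let ?N = "Suc (Suc p)"
  let ?G = "facet ?N i \<inter> facet ?N j"
  let ?g = "coface j \<circ> coface i"
  have G_eq: "?G = simplex_face ({..?N} - {i, j})"
  proof -
    have "({..?N} - {i}) \<inter> ({..?N} - {j}) = {..?N} - {i, j}" by auto
    then show ?thesis by (simp add: facet_def simplex_face_Int)
  qed
  have "pl_space ?G"
    unfolding G_eq by (rule pl_space_simplex_face) simp
  have G_image: "(\<lambda>z. z \<circ> ?g) ` ?G \<subseteq> std_simplex p"
    unfolding G_eq by (rule comp_coface_coface_image[OF assms(2,3)])
  have G_zero: "z i = 0" "z j = 0" "\<And>l. l > ?N \<Longrightarrow> z l = 0" if "z \<in> ?G" for z
    using that unfolding facet_def simplex_face_def by auto
  have "restr Fm ?G (facet ?N i) (facet_section Fm ?N i xi)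
      = Fm ?G (std_simplex p) (\<lambda>z. z \<circ> ?g)
          (Fm (std_simplex p) (std_simplex (Suc p)) (simplex_map (coface (j - 1)) p) xi)"
  proof (rule restr_facet_section[OF assms(1) _ _ _ \<open>pl_space ?G\<close> G_image _ assms(4)])
    fix z assume z: "z \<in> ?G"
    have "simplex_map (coface (j - 1)) p ((z \<circ> coface i) \<circ> coface (j - 1)) = z \<circ> coface i"
      by (rule simplex_map_coface_comp_coface) (use G_zero[OF z] assms(2,3) in \<open>auto simp: coface_def\<close>)
    then show "z \<circ> coface i = simplex_map (coface (j - 1)) p (z \<circ> ?g)"
      using coface_comp_coface[OF assms(2)] by (simp add: o_assoc)
  qed (use assms(2,3) in auto)
  moreover have "restr Fm ?G (facet ?N j) (facet_section Fm ?N j xj)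
      = Fm ?G (std_simplex p) (\<lambda>z. z \<circ> ?g)
          (Fm (std_simplex p) (std_simplex (Suc p)) (simplex_map (coface i) p) xj)"
  proof (rule restr_facet_section[OF assms(1) _ _ _ \<open>pl_space ?G\<close> G_image _ assms(5)])
    fix z assume z: "z \<in> ?G"
    have "simplex_map (coface i) p ((z \<circ> coface j) \<circ> coface i) = z \<circ> coface j"
      by (rule simplex_map_coface_comp_coface) (use G_zero[OF z] assms(2,3) in \<open>auto simp: coface_def\<close>)
    then show "z \<circ> coface j = simplex_map (coface i) p (z \<circ> ?g)"
      by (simp add: o_assoc)
  qed (use assms(2,3) in auto)
  ultimately show ?thesis
    using assms(6) by simp
qed

lemma quasi_pl_space_horn_section:
  assumes "quasi_pl_space Fo Fm" "1 \<le> n" "k \<le> n"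
    and "\<forall>i\<le>n. i \<noteq> k \<longrightarrow> x i \<in> Fo (std_simplex (n - 1))"
    and "\<forall>i j. i < j \<and> j \<le> n \<and> i \<noteq> k \<and> j \<noteq> k \<longrightarrow>
           sset_op Fm (coface i) (n - 2) (n - 1) (x j) = sset_op Fm (coface (j - 1)) (n - 2) (n - 1) (x i)"
  obtains s where "s \<in> Fo (horn n k)"
    and "\<And>i. i \<in> {..n} - {k} \<Longrightarrow> restr Fm (facet n i) (horn n k) s = facet_section Fm n i (x i)"
proof (rule equalizer_cond_glue[of Fo Fm "horn n k" "facet n" "{..n} - {k}"
      "\<lambda>i. facet_section Fm n i (x i)"])
  have F: "presheaf Fo Fm"
    using assms(1) by (rule quasi_pl_space_presheaf)
  show "equalizer_cond Fo Fm (horn n k) (facet n ` ({..n} - {k}))"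
    using closedin_facet_horn[OF assms(2,3)]
    by (intro quasi_pl_space_closed_cover[OF assms(1) pl_space_horn[OF assms(2,3)]])
       (auto simp: horn_def locally_finite_in_finite)
  show "inj_on (facet n) ({..n} - {k})"
    using inj_on_facet by (rule inj_on_subset) auto
  show "facet_section Fm n i (x i) \<in> Fo (facet n i)" if "i \<in> {..n} - {k}" for i
    using that assms(2,4) by (intro facet_section_closed[OF F]) auto
  show "restr Fm (facet n i \<inter> facet n j) (facet n i) (facet_section Fm n i (x i))
      = restr Fm (facet n i \<inter> facet n j) (facet n j) (facet_section Fm n j (x j))"
    if "i \<in> {..n} - {k}" "j \<in> {..n} - {k}" "i < j" for i j
  proof -
    have "2 \<le> n"
      using that assms(3) by auto
    define p where "p = n - 2"
    then have n: "n = Suc (Suc p)"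
      using \<open>2 \<le> n\<close> by simp
    have "x i \<in> Fo (std_simplex (Suc p))" "x j \<in> Fo (std_simplex (Suc p))"
      using that assms(4) n by auto
    moreover have "sset_op Fm (coface i) p (Suc p) (x j) = sset_op Fm (coface (j - 1)) p (Suc p) (x i)"
      using that assms(5) n by auto
    ultimately show ?thesis
      unfolding n using that n
      by (intro facet_sections_compatible[OF F \<open>i < j\<close>]) (simp_all add: sset_op_def)
  qed
qed (use that in blast)

lemma horn_retraction_pullback_facet:
  assumes "presheaf Fo Fm" "n = Suc m" "k \<le> n" "i \<in> {..n} - {k}" "s \<in> Fo (horn n k)"
    and "restr Fm (facet n i) (horn n k) s = facet_section Fm n i xi" "xi \<in> Fo (std_simplex m)"
  shows "Fm (std_simplex m) (std_simplex n) (simplex_map (coface i) m)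
           (Fm (std_simplex n) (horn n k) (horn_retraction n k) s) = xi"
proof -
  let ?D = "simplex_map (coface i) m"
  have n: "1 \<le> n" "i \<le> Suc m" using assms(2,4) by auto
  have D_image: "?D ` std_simplex m \<subseteq> facet n i"
    using simplex_map_coface_image[OF n(2)] assms(2) by simp
  have facet_horn: "facet n i \<subseteq> horn n k"
    by (rule facet_subset_horn[OF n(1) assms(3,4)])
  have "Fm (std_simplex m) (std_simplex n) ?D (Fm (std_simplex n) (horn n k) (horn_retraction n k) s)
      = Fm (std_simplex m) (horn n k) ?D s"
    using D_image facet_horn facet_subset_std_simplex assms(2)
    by (intro presheaf_retraction[OF assms(1) pl_map_horn_retraction[OF n(1) assms(3)]
          horn_retraction_fixes_horn[OF n(1) assms(3)] pl_map_simplex_map_coface[OF n(2)] _ assms(5)]) auto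
  also have "\<dots> = Fm (std_simplex m) (facet n i) ?D (restr Fm (facet n i) (horn n k) s)"
    using D_image facet_horn pl_space_horn[OF n(1) assms(3)] assms(2)
    by (intro presheaf_restr_factor[OF assms(1) pl_map_simplex_map_coface[OF n(2)] _ _ _ assms(5)]) auto
  also have "\<dots> = Fm (std_simplex m) (facet n i) ?D (Fm (facet n i) (std_simplex m) (\<lambda>z. z \<circ> coface i) xi)"
    using assms(2,6) by (simp add: facet_section_def)
  also have "\<dots> = xi"
  proof (rule presheaf_left_inverse[OF assms(1) _ _ _ assms(7)])
    show "pl_map (std_simplex m) (facet n i) ?D"
      using assms(2) by (intro pl_map_simplex_map_coface[OF n(2)]) simp_all
    show "pl_map (facet n i) (std_simplex m) (\<lambda>z. z \<circ> coface i)"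
      using assms(2) by (intro pl_map_comp_coface[OF n(2)]) simp_all
    show "?D z \<circ> coface i = z" if "z \<in> std_simplex m" for z
      using that by (intro comp_coface_simplex_map_coface) (simp add: std_simplex_def)
  qed
  finally show ?thesis .
qed

theorem proposition2p10:
  fixes Fo :: "pt set \<Rightarrow> 'a set"
    and Fm :: "pt set \<Rightarrow> pt set \<Rightarrow> (pt \<Rightarrow> pt) \<Rightarrow> 'a \<Rightarrow> 'a"
  assumes "quasi_pl_space Fo Fm"
  shows "kan_complex (sset_obj Fo) (sset_op Fm)"
  unfolding kan_complex_def
proof (intro allI impI, elim conjE)
  fix n k x
  assume n: "1 \<le> n" and k: "k \<le> n"
    and x: "\<forall>i\<le>n. i \<noteq> k \<longrightarrow> x i \<in> sset_obj Fo (n - 1)"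
    and compatible: "\<forall>i j. i < j \<and> j \<le> n \<and> i \<noteq> k \<and> j \<noteq> k \<longrightarrow>
      sset_op Fm (coface i) (n - 2) (n - 1) (x j) = sset_op Fm (coface (j - 1)) (n - 2) (n - 1) (x i)"
  have F: "presheaf Fo Fm"
    using assms by (rule quasi_pl_space_presheaf)
  obtain m where m: "n = Suc m"
    using n by (cases n) auto
  obtain s where s: "s \<in> Fo (horn n k)"
    and s_facet: "\<And>i. i \<in> {..n} - {k} \<Longrightarrow>
      restr Fm (facet n i) (horn n k) s = facet_section Fm n i (x i)"
    using quasi_pl_space_horn_section[OF assms n k _ compatible] x unfolding sset_obj_def by blast
  define y where "y = Fm (std_simplex n) (horn n k) (horn_retraction n k) s"
  have "y \<in> sset_obj Fo n"
    unfolding y_def sset_obj_def by (rule presheaf_closed[OF F pl_map_horn_retraction[OF n k] s])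
  moreover have "sset_op Fm (coface i) (n - 1) n y = x i" if "i \<le> n" "i \<noteq> k" for i
    unfolding sset_op_def y_def
    using horn_retraction_pullback_facet[OF F m k _ s s_facet] that x m by (simp add: sset_obj_def)
  ultimately show "\<exists>y\<in>sset_obj Fo n. \<forall>i\<le>n. i \<noteq> k \<longrightarrow> sset_op Fm (coface i) (n - 1) n y = x i"
    by blast
qed

end
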